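(* Let $d\ge1$, $\lambda>0$, $\delta>0$, and let $f:\mathbb{R}^d\to\mathbb{R}$ satisfy: (A1) $f$ is continuous and has at least one minimizer; (A2) $C_\delta:=\int_{\mathbb{R}^d}\exp(-f(y)/\delta)\,dy<+\infty$. Then for all $z\in\mathbb{R}^d$, \[H_{\lambda,\delta}(z)\ge-\log C_\delta+\frac d2\log(2\pi\lambda\delta);\] in particular $H_{\lambda,\delta}$ is bounded below.
   Context: The zeroth-order proximal operator $T:=\operatorname{zprox}^\delta_{\lambda,f}$ is $T(x)=\dfrac{\mathbb{E}_{y\sim\mathcal N(x,\lambda\delta I)}[y\exp(-f(y)/\delta)]}{\mathbb{E}_{y\sim\mathcal N(x,\lambda\delta I)}[\exp(-f(y)/\delta)]}$; under (A1)–(A2) it is a bijection of $\mathbb{R}^d$. The soft Moreau envelope is $f^{\lambda,\delta}(x)=-\delta\log\mathbb{E}_{y\sim\mathcal N(x,\lambda\delta I)}[\exp(-f(y)/\delta)]$. $H_{\lambda,\delta}(x)=-\frac{1}{2\lambda\delta}\|T^{-1}(x)-x\|^2+\frac1\delta f^{\lambda,\delta}(T^{-1}(x))$. *)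

theory Defs
  imports "HOL-Analysis.Analysis"
begin

definition gauss_dens :: "real \<Rightarrow> 'a::euclidean_space \<Rightarrow> 'a \<Rightarrow> real" where
  "gauss_dens s x y = (2 * pi * s) powr (- real DIM('a) / 2) * exp (- (norm (y - x))\<^sup>2 / (2 * s))"

definition gauss_exp :: "real \<Rightarrow> 'a::euclidean_space \<Rightarrow> ('a \<Rightarrow> 'b::{banach, second_countable_topology}) \<Rightarrow> 'b" where
  "gauss_exp s x g = (\<integral>y. gauss_dens s x y *\<^sub>R g y \<partial>lborel)"

definition zprox :: "real \<Rightarrow> real \<Rightarrow> ('a::euclidean_space \<Rightarrow> real) \<Rightarrow> 'a \<Rightarrow> 'a" where
  "zprox lam del f x =
     gauss_exp (lam * del) x (\<lambda>y. exp (- f y / del) *\<^sub>R y) /\<^sub>R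
     gauss_exp (lam * del) x (\<lambda>y. exp (- f y / del))"

definition soft_moreau :: "real \<Rightarrow> real \<Rightarrow> ('a::euclidean_space \<Rightarrow> real) \<Rightarrow> 'a \<Rightarrow> real" where
  "soft_moreau lam del f x = - del * ln (gauss_exp (lam * del) x (\<lambda>y. exp (- f y / del)))"

definition H_fun :: "real \<Rightarrow> real \<Rightarrow> ('a::euclidean_space \<Rightarrow> real) \<Rightarrow> 'a \<Rightarrow> real" where
  "H_fun lam del f x =
     (let w = inv (zprox lam del f) x in
      - (1 / (2 * lam * del)) * (norm (w - x))\<^sup>2 + (1 / del) * soft_moreau lam del f w)"

end

theory Submission
  imports Defs
begin

text \<open>Write \<open>h = exp (- f / \<delta>)\<close>, \<open>s = \<lambda> \<delta>\<close>, \<open>G\<close> for the Gaussian smoothing of \<open>h\<close> at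
  variance \<open>s\<close> and \<open>T = zprox\<close> for its barycentre map, so that \<open>H (T w) = - |T w - w|\<^sup>2 / (2 s) - ln G(w)\<close>.
  Jensen's inequality for the exponential tilt \<open>y \<mapsto> exp ((y - w) \<bullet> (T w - w) / s)\<close> gives
  \<open>G (T w) \<ge> exp (|T w - w|\<^sup>2 / (2 s)) G(w)\<close>, hence \<open>H (T w) \<ge> - ln G (T w)\<close>, and \<open>G\<close> is at
  most the peak of the Gaussian density times \<open>C\<^sub>\<delta>\<close>.  That \<open>T w = z\<close> has a solution follows by
  minimising the continuous, coercive function \<open>s ln G(w) + |w|\<^sup>2 / 2 - z \<bullet> w\<close>, whose
  first-order condition at a minimiser reads \<open>T w = z\<close>.\<close>

lemma exp_le_second_order:
  fixes t Y :: real
  assumes "\<bar>t\<bar> \<le> 1"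
  shows "exp (t * Y) \<le> 1 + t * Y + t\<^sup>2 * (exp (2 * Y) + exp (- 2 * Y))"
proof -
  obtain \<xi> where xi: "\<bar>\<xi>\<bar> \<le> \<bar>t * Y\<bar>"
    and "exp (t * Y) = (\<Sum>m<2. (t * Y) ^ m / fact m) + exp \<xi> / fact 2 * (t * Y) ^ 2"
    using Maclaurin_exp_le[of "t * Y" 2] by blast
  then have taylor: "exp (t * Y) = 1 + t * Y + t\<^sup>2 * (exp \<xi> / 2 * Y\<^sup>2)"
    by (simp add: numeral_2_eq_2 power_mult_distrib)
  have "\<bar>t * Y\<bar> \<le> \<bar>Y\<bar>"
    using assms by (simp add: abs_mult mult_left_le_one_le)
  then have "exp \<xi> \<le> exp \<bar>Y\<bar>"
    using xi by simp
  moreover have "Y\<^sup>2 \<le> 2 * exp \<bar>Y\<bar>"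
    using exp_lower_Taylor_quadratic[of "\<bar>Y\<bar>"] by simp
  ultimately have "exp \<xi> / 2 * Y\<^sup>2 \<le> exp \<bar>Y\<bar> / 2 * (2 * exp \<bar>Y\<bar>)"
    by (intro mult_mono) auto
  also have "\<dots> = exp (2 * \<bar>Y\<bar>)"
    by (simp add: exp_add[symmetric])
  also have "\<dots> \<le> exp (2 * Y) + exp (- 2 * Y)"
    by (cases "Y \<ge> 0") auto
  finally have "t\<^sup>2 * (exp \<xi> / 2 * Y\<^sup>2) \<le> t\<^sup>2 * (exp (2 * Y) + exp (- 2 * Y))"
    by (intro mult_left_mono) auto
  then show ?thesis
    unfolding taylor by simp
qed

lemma mult_exp_neg_square_le:
  fixes x s :: real
  assumes "s > 0"
  shows "x * exp (- x\<^sup>2 / (2 * s)) \<le> s / 2 + 1"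
proof -
  define a where "a = x\<^sup>2 / (2 * s)"
  have a_nonneg: "a \<ge> 0"
    using assms by (simp add: a_def)
  have "x \<le> s / 2 + a"
    using assms sum_squares_bound[of x s] unfolding a_def by (simp add: field_simps power2_eq_square)
  also have "\<dots> \<le> s / 2 * exp a + exp a"
  proof (rule add_mono)
    show "s / 2 \<le> s / 2 * exp a"
      using a_nonneg assms by simp
    show "a \<le> exp a"
      using exp_ge_add_one_self[of a] by linarith
  qed
  also have "\<dots> = (s / 2 + 1) * exp a"
    by (simp add: algebra_simps)
  finally have "x * exp (- a) \<le> (s / 2 + 1) * exp a * exp (- a)"
    by (simp add: mult_right_mono)
  also have "\<dots> = s / 2 + 1"
    by (simp add: exp_minus)
  finally show ?thesis
    by (simp add: a_def)
qed

lemma nonpos_if_le_small_multiples: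
  fixes q K :: real
  assumes "\<And>t. 0 < t \<Longrightarrow> t \<le> 1 \<Longrightarrow> q \<le> t * K"
  shows "q \<le> 0"
proof (rule ccontr)
  assume "\<not> q \<le> 0"
  then have q: "q > 0" by simp
  with assms[of 1] have K: "K > 0" by simp
  define t where "t = min 1 (q / (2 * K))"
  have "0 < t" "t \<le> 1"
    using q K by (auto simp: t_def)
  then have "q \<le> t * K" by (rule assms)
  also have "\<dots> \<le> q / (2 * K) * K"
    using K by (intro mult_right_mono) (auto simp: t_def)
  also have "\<dots> = q / 2"
    using K by simp
  finally show False
    using q by simp
qed

lemma integral_mult_exp_ge_tangent:
  fixes F X :: "'b \<Rightarrow> real"
  assumes "integrable M F" and "integrable M (\<lambda>y. F y * X y)"
    and "integrable M (\<lambda>y. F y * exp (X y))" and "\<And>y. F y \<ge> 0"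
  shows "exp c * ((\<integral>y. F y \<partial>M) + (\<integral>y. F y * X y \<partial>M) - c * (\<integral>y. F y \<partial>M))
    \<le> (\<integral>y. F y * exp (X y) \<partial>M)"
proof -
  have "exp c * (F y + F y * X y - c * F y) \<le> F y * exp (X y)" for y
  proof -
    have "exp c * (1 + (X y - c)) \<le> exp c * exp (X y - c)"
      by (intro mult_left_mono exp_ge_add_one_self) auto
    then have "F y * (exp c * (1 + (X y - c))) \<le> F y * exp (X y)"
      using assms(4)[of y] by (simp add: mult_left_mono flip: exp_add)
    then show ?thesis
      by (simp add: algebra_simps)
  qed
  then have "(\<integral>y. exp c * (F y + F y * X y - c * F y) \<partial>M) \<le> (\<integral>y. F y * exp (X y) \<partial>M)"
    using assms(1-3)
    by (intro Bochner_Integration.integral_mono)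
      (auto intro!: Bochner_Integration.integrable_diff Bochner_Integration.integrable_add)
  then show ?thesis
    using assms(1,2) by simp
qed

lemma continuous_coercive_attains_min:
  fixes \<Phi> :: "'a::{real_normed_vector, heine_borel} \<Rightarrow> real"
  assumes "continuous_on UNIV \<Phi>" and "\<And>w. norm w \<ge> R \<Longrightarrow> \<Phi> w \<ge> norm w - C"
  shows "\<exists>w. \<forall>y. \<Phi> w \<le> \<Phi> y"
proof -
  define r where "r = max 0 (max R (\<Phi> 0 + C + 1))"
  obtain w where w: "w \<in> cball 0 r" "\<And>y. y \<in> cball 0 r \<Longrightarrow> \<Phi> w \<le> \<Phi> y"
    using continuous_attains_inf[of "cball 0 r" \<Phi>] continuous_on_subset[OF assms(1)]
    by (auto simp: r_def)
  have "\<Phi> w \<le> \<Phi> y" for y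
  proof (cases "norm y \<le> r")
    case True
    then show ?thesis using w by simp
  next
    case False
    then have "\<Phi> y \<ge> norm y - C" "norm y > \<Phi> 0 + C + 1"
      using assms(2) by (auto simp: r_def)
    moreover have "\<Phi> w \<le> \<Phi> 0"
      using w by (simp add: r_def)
    ultimately show ?thesis by linarith
  qed
  then show ?thesis by blast
qed

locale gaussian_smoothing =
  fixes s :: real and h :: "'a::euclidean_space \<Rightarrow> real"
  assumes s_pos: "s > 0" and h_pos: "\<And>y. h y > 0"
    and continuous_h: "continuous_on UNIV h" and integrable_h: "integrable lborel h"
begin

definition peak :: real where
  "peak = (2 * pi * s) powr (- real DIM('a) / 2)"

definition mass :: "'a \<Rightarrow> real" where
  "mass w = (\<integral>y. gauss_dens s w y * h y \<partial>lborel)"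

definition moment :: "'a \<Rightarrow> 'a" where
  "moment w = (\<integral>y. gauss_dens s w y *\<^sub>R (h y *\<^sub>R y) \<partial>lborel)"

definition barycenter :: "'a \<Rightarrow> 'a" where
  "barycenter w = moment w /\<^sub>R mass w"

lemma peak_pos: "peak > 0"
  using s_pos by (simp add: peak_def)

lemma gauss_dens_eq: "gauss_dens s w (y::'a) = peak * exp (- (norm (y - w))\<^sup>2 / (2 * s))"
  by (simp add: gauss_dens_def peak_def)

lemma gauss_dens_pos: "gauss_dens s w (y::'a) > 0"
  using peak_pos by (simp add: gauss_dens_eq)

lemma gauss_dens_le_peak: "gauss_dens s w (y::'a) \<le> peak"
  using peak_pos s_pos by (simp add: gauss_dens_eq mult_le_cancel_left1)

lemma gauss_dens_tilt:
  "gauss_dens s w y * exp (((y - w) \<bullet> u) / s) = exp ((norm u)\<^sup>2 / (2 * s)) * gauss_dens s (w + u) (y::'a)"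
proof -
  have "(norm (y - (w + u)))\<^sup>2 = (norm (y - w))\<^sup>2 - 2 * ((y - w) \<bullet> u) + (norm u)\<^sup>2"
    by (simp add: power2_norm_eq_inner inner_diff_left inner_diff_right inner_add_left
        inner_add_right inner_commute algebra_simps)
  then have "- (norm (y - w))\<^sup>2 / (2 * s) + ((y - w) \<bullet> u) / s
      = (norm u)\<^sup>2 / (2 * s) + - (norm (y - (w + u)))\<^sup>2 / (2 * s)"
    using s_pos by (simp add: field_simps)
  then show ?thesis
    unfolding gauss_dens_eq by (metis exp_add mult.assoc mult.left_commute)
qed

text \<open>Tilt by \<open>t v\<close> and expand \<open>exp (t Y)\<close> to second order; the remainder terms are
  again tilted densities.\<close>
lemma gauss_dens_le_second_order:
  assumes "\<bar>t\<bar> \<le> 1"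
  shows "gauss_dens s (w + t *\<^sub>R v) (y::'a) \<le> gauss_dens s w y * (1 + t * (((y - w) \<bullet> v) / s))
    + t\<^sup>2 * exp (2 * (norm v)\<^sup>2 / s) * (gauss_dens s (w + 2 *\<^sub>R v) y + gauss_dens s (w - 2 *\<^sub>R v) y)"
proof -
  define Y where "Y = ((y - w) \<bullet> v) / s"
  define E where "E = exp (2 * (norm v)\<^sup>2 / s)"
  have "gauss_dens s (w + t *\<^sub>R v) y \<le> exp ((norm (t *\<^sub>R v))\<^sup>2 / (2 * s)) * gauss_dens s (w + t *\<^sub>R v) y"
    using s_pos gauss_dens_pos[of "w + t *\<^sub>R v" y] by simp
  also have "\<dots> = gauss_dens s w y * exp (t * Y)"
    using gauss_dens_tilt[of w y "t *\<^sub>R v"] by (simp add: Y_def inner_scaleR_right)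
  also have "\<dots> \<le> gauss_dens s w y * (1 + t * Y + t\<^sup>2 * (exp (2 * Y) + exp (- 2 * Y)))"
    using gauss_dens_pos[of w y] assms by (intro mult_left_mono exp_le_second_order) auto
  also have "\<dots> = gauss_dens s w y * (1 + t * Y)
      + t\<^sup>2 * (gauss_dens s w y * exp (2 * Y) + gauss_dens s w y * exp (- 2 * Y))"
    by (simp add: algebra_simps)
  also have "gauss_dens s w y * exp (2 * Y) = E * gauss_dens s (w + 2 *\<^sub>R v) y"
    using gauss_dens_tilt[of w y "2 *\<^sub>R v"]
    by (simp add: Y_def E_def inner_scaleR_right power_mult_distrib)
  also have "gauss_dens s w y * exp (- 2 * Y) = E * gauss_dens s (w - 2 *\<^sub>R v) y"
    using gauss_dens_tilt[of w y "(-2) *\<^sub>R v"]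
    by (simp add: Y_def E_def inner_scaleR_right power_mult_distrib)
  finally show ?thesis
    by (simp add: Y_def E_def algebra_simps)
qed

lemma h_measurable [measurable]: "h \<in> borel_measurable lborel"
  using borel_measurable_continuous_onI[OF continuous_h] by simp

lemma gauss_dens_measurable [measurable]: "(\<lambda>y::'a. gauss_dens s w y) \<in> borel_measurable lborel"
proof -
  have "continuous_on UNIV (\<lambda>y::'a. gauss_dens s w y)"
    unfolding gauss_dens_eq by (intro continuous_intros) (use s_pos in auto)
  then show ?thesis
    using borel_measurable_continuous_onI by simp
qed

lemma integrable_mass: "integrable lborel (\<lambda>y. gauss_dens s w y * h y)"
proof (rule Bochner_Integration.integrable_bound[OF integrable_mult_right[OF integrable_h, of peak]])
  show "AE y in lborel. norm (gauss_dens s w y * h y) \<le> norm (peak * h y)"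
  proof (intro AE_I2)
    fix y
    have "gauss_dens s w y * h y \<le> peak * h y"
      using gauss_dens_le_peak h_pos[of y] by (intro mult_right_mono) auto
    then show "norm (gauss_dens s w y * h y) \<le> norm (peak * h y)"
      using gauss_dens_pos[of w y] h_pos[of y] peak_pos by (simp add: abs_of_pos)
  qed
qed measurable

lemma integrable_moment: "integrable lborel (\<lambda>y. gauss_dens s w y *\<^sub>R (h y *\<^sub>R y))"
proof (rule Bochner_Integration.integrable_bound
    [OF integrable_mult_right[OF integrable_h, of "peak * (norm w + s / 2 + 1)"]])
  show "AE y in lborel. norm (gauss_dens s w y *\<^sub>R (h y *\<^sub>R y))
      \<le> norm (peak * (norm w + s / 2 + 1) * h y)"
  proof (intro AE_I2)
    fix y
    have "gauss_dens s w y * norm y \<le> gauss_dens s w y * (norm w + norm (y - w))"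
      using gauss_dens_pos[of w y] norm_triangle_sub[of y w] by (intro mult_left_mono) auto
    also have "\<dots> = gauss_dens s w y * norm w
        + peak * (norm (y - w) * exp (- (norm (y - w))\<^sup>2 / (2 * s)))"
      by (simp add: gauss_dens_eq algebra_simps)
    also have "\<dots> \<le> peak * norm w + peak * (s / 2 + 1)"
      using gauss_dens_le_peak mult_exp_neg_square_le[OF s_pos] peak_pos
      by (intro add_mono mult_left_mono mult_right_mono) auto
    finally have "gauss_dens s w y * norm y \<le> peak * (norm w + s / 2 + 1)"
      by (simp add: algebra_simps)
    then have "(gauss_dens s w y * norm y) * h y \<le> peak * (norm w + s / 2 + 1) * h y"
      using h_pos[of y] by (intro mult_right_mono) auto
    then show "norm (gauss_dens s w y *\<^sub>R (h y *\<^sub>R y)) \<le> norm (peak * (norm w + s / 2 + 1) * h y)"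
      using gauss_dens_pos[of w y] h_pos[of y] peak_pos s_pos by (simp add: abs_of_pos)
  qed
qed measurable

lemma h_bounded_below_on_cball: "\<exists>m>0. \<forall>y\<in>cball p r. m \<le> h y"
proof (cases "r \<ge> 0")
  case True
  then obtain x where "\<forall>y\<in>cball p r. h x \<le> h y"
    using continuous_attains_inf[of "cball p r" h] continuous_on_subset[OF continuous_h] by auto
  then show ?thesis
    using h_pos by blast
next
  case False
  then show ?thesis
    by (intro exI[of _ 1]) auto
qed

lemma mass_ge_ball:
  assumes "m \<ge> 0" and "\<And>y. y \<in> ball p 1 \<Longrightarrow> m \<le> h y"
  shows "peak * exp (- (dist w p + 1)\<^sup>2 / (2 * s)) * m * measure lborel (ball (0::'a) 1) \<le> mass w"
proof -
  define K where "K = peak * exp (- (dist w p + 1)\<^sup>2 / (2 * s)) * m"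
  have "indicator (ball p 1) y * K \<le> gauss_dens s w y * h y" for y
  proof (cases "y \<in> ball p 1")
    case True
    then have "norm (y - w) \<le> dist w p + 1"
      using dist_triangle[of y w p] by (simp add: dist_norm norm_minus_commute)
    then have "(norm (y - w))\<^sup>2 \<le> (dist w p + 1)\<^sup>2"
      by (intro power_mono) auto
    then have "exp (- (dist w p + 1)\<^sup>2 / (2 * s)) \<le> exp (- (norm (y - w))\<^sup>2 / (2 * s))"
      using s_pos by (simp add: divide_right_mono)
    then have "peak * exp (- (dist w p + 1)\<^sup>2 / (2 * s)) \<le> gauss_dens s w y"
      unfolding gauss_dens_eq using peak_pos by simp
    then have "K \<le> gauss_dens s w y * h y"
      unfolding K_def using True assms peak_pos gauss_dens_pos[of w y] by (intro mult_mono) auto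
    then show ?thesis
      using True by simp
  next
    case False
    then show ?thesis
      using gauss_dens_pos[of w y] h_pos[of y] by simp
  qed
  then have "(\<integral>y. indicator (ball p 1) y * K \<partial>lborel) \<le> mass w"
    unfolding mass_def using integrable_mass
    by (intro Bochner_Integration.integral_mono integrable_mult_left integrable_real_indicator
        emeasure_bounded_finite) auto
  then show ?thesis
    by (simp add: K_def content_ball algebra_simps)
qed

lemma mass_pos: "mass w > 0"
proof -
  obtain m where m: "m > 0" "\<forall>y\<in>cball w 1. m \<le> h y"
    using h_bounded_below_on_cball by blast
  have "0 < peak * exp (- (dist w w + 1)\<^sup>2 / (2 * s)) * m * measure lborel (ball (0::'a) 1)"
    using peak_pos m(1) content_ball_gt_0_iff[of "0::'a" 1] by simp
  also have "\<dots> \<le> mass w"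
    using m by (intro mass_ge_ball) auto
  finally show ?thesis .
qed

lemma mass_le: "mass w \<le> peak * (\<integral>y. h y \<partial>lborel)"
proof -
  have "mass w \<le> (\<integral>y. peak * h y \<partial>lborel)"
    unfolding mass_def using integrable_mass integrable_h gauss_dens_le_peak h_pos
    by (intro Bochner_Integration.integral_mono) (auto intro!: mult_right_mono less_imp_le)
  then show ?thesis by simp
qed

lemma continuous_on_mass: "continuous_on UNIV mass"
proof (unfold continuous_on_sequentially, intro allI ballI impI, elim conjE)
  fix x :: "nat \<Rightarrow> 'a" and a
  assume lim: "x \<longlonglongrightarrow> a"
  have "(\<lambda>i. \<integral>y. gauss_dens s (x i) y * h y \<partial>lborel) \<longlonglongrightarrow> (\<integral>y. gauss_dens s a y * h y \<partial>lborel)"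
  proof (rule integral_dominated_convergence[where w = "\<lambda>y. peak * h y"])
    show "integrable lborel (\<lambda>y. peak * h y)"
      using integrable_h by simp
    show "AE y in lborel. (\<lambda>i. gauss_dens s (x i) y * h y) \<longlonglongrightarrow> gauss_dens s a y * h y"
      unfolding gauss_dens_eq by (intro AE_I2 tendsto_intros lim) (use s_pos in auto)
    show "AE y in lborel. norm (gauss_dens s (x i) y * h y) \<le> peak * h y" for i
    proof (intro AE_I2)
      fix y
      have "gauss_dens s (x i) y * h y \<le> peak * h y"
        using gauss_dens_le_peak h_pos[of y] by (intro mult_right_mono) auto
      then show "norm (gauss_dens s (x i) y * h y) \<le> peak * h y"
        using gauss_dens_pos[of "x i" y] h_pos[of y] by (simp add: abs_of_pos)
    qed
  qed measurable
  then show "(mass \<circ> x) \<longlonglongrightarrow> mass a"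
    by (simp add: mass_def o_def)
qed

lemma integrable_centered_moment: "integrable lborel (\<lambda>y. gauss_dens s w y * h y * ((y - w) \<bullet> u))"
  and integral_centered_moment:
    "(\<integral>y. gauss_dens s w y * h y * ((y - w) \<bullet> u) \<partial>lborel) = mass w * ((barycenter w - w) \<bullet> u)"
proof -
  have split: "(\<lambda>y. gauss_dens s w y * h y * ((y - w) \<bullet> u)) =
      (\<lambda>y. (gauss_dens s w y *\<^sub>R (h y *\<^sub>R y)) \<bullet> u - gauss_dens s w y * h y * (w \<bullet> u))"
    by (auto simp: inner_diff_left algebra_simps)
  show "integrable lborel (\<lambda>y. gauss_dens s w y * h y * ((y - w) \<bullet> u))"
    unfolding split using integrable_moment integrable_mass
    by (intro Bochner_Integration.integrable_diff integrable_inner_left integrable_mult_left) auto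
  have "(\<integral>y. gauss_dens s w y * h y * ((y - w) \<bullet> u) \<partial>lborel)
      = (\<integral>y. (gauss_dens s w y *\<^sub>R (h y *\<^sub>R y)) \<bullet> u \<partial>lborel)
        - (\<integral>y. gauss_dens s w y * h y * (w \<bullet> u) \<partial>lborel)"
    unfolding split
    by (intro Bochner_Integration.integral_diff integrable_inner_left integrable_mult_left
        integrable_moment integrable_mass)
  also have "(\<integral>y. (gauss_dens s w y *\<^sub>R (h y *\<^sub>R y)) \<bullet> u \<partial>lborel) = moment w \<bullet> u"
    unfolding moment_def using integrable_moment[of w] by (intro integral_inner_left) auto
  also have "(\<integral>y. gauss_dens s w y * h y * (w \<bullet> u) \<partial>lborel) = mass w * (w \<bullet> u)"
    unfolding mass_def by (rule integral_mult_left_zero)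
  also have "moment w = mass w *\<^sub>R barycenter w"
    using mass_pos[of w] by (simp add: barycenter_def)
  finally show "(\<integral>y. gauss_dens s w y * h y * ((y - w) \<bullet> u) \<partial>lborel) = mass w * ((barycenter w - w) \<bullet> u)"
    by (simp add: inner_diff_left algebra_simps)
qed

lemma mass_barycenter_ge:
  "exp ((norm (barycenter w - w))\<^sup>2 / (2 * s)) * mass w \<le> mass (barycenter w)"
proof -
  define u where "u = barycenter w - w"
  define a where "a = (norm u)\<^sup>2 / (2 * s)"
  define F where "F y = gauss_dens s w y * h y" for y
  define X where "X y = ((y - w) \<bullet> u) / s" for y
  have tilt: "F y * exp (X y) = exp a * (gauss_dens s (w + u) y * h y)" for y
  proof -
    have "F y * exp (X y) = (gauss_dens s w y * exp (((y - w) \<bullet> u) / s)) * h y"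
      by (simp add: F_def X_def)
    then show ?thesis
      by (simp add: gauss_dens_tilt a_def)
  qed
  have integral_F: "(\<integral>y. F y \<partial>lborel) = mass w"
    by (simp add: mass_def F_def)
  have integral_FX: "(\<integral>y. F y * X y \<partial>lborel) = 2 * a * mass w"
    using integral_centered_moment[of w u] unfolding F_def X_def
    by (simp add: a_def u_def power2_norm_eq_inner)
  have "exp (2 * a) * ((\<integral>y. F y \<partial>lborel) + (\<integral>y. F y * X y \<partial>lborel) - 2 * a * (\<integral>y. F y \<partial>lborel))
      \<le> (\<integral>y. F y * exp (X y) \<partial>lborel)"
  proof (rule integral_mult_exp_ge_tangent)
    show "integrable lborel F"
      using integrable_mass unfolding F_def by simp
    show "integrable lborel (\<lambda>y. F y * X y)"
      using integrable_centered_moment unfolding F_def X_def by simp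
    show "integrable lborel (\<lambda>y. F y * exp (X y))"
      unfolding tilt by (intro integrable_mult_right integrable_mass)
    show "F y \<ge> 0" for y
      using gauss_dens_pos[of w y] h_pos[of y] by (simp add: F_def)
  qed
  also have "\<dots> = exp a * mass (w + u)"
    unfolding tilt mass_def by simp
  finally have "exp a * (exp a * mass w) \<le> exp a * mass (w + u)"
    unfolding integral_F integral_FX by (simp add: mult.assoc[symmetric] flip: exp_add)
  then show ?thesis
    by (simp add: u_def a_def)
qed

lemma mass_le_second_order:
  assumes "\<bar>t\<bar> \<le> 1"
  shows "mass (w + t *\<^sub>R v) \<le> mass w * (1 + t / s * ((barycenter w - w) \<bullet> v))
    + t\<^sup>2 * exp (2 * (norm v)\<^sup>2 / s) * (mass (w + 2 *\<^sub>R v) + mass (w - 2 *\<^sub>R v))"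
proof -
  define E where "E = exp (2 * (norm v)\<^sup>2 / s)"
  define R where "R y = gauss_dens s w y * h y + t / s * (gauss_dens s w y * h y * ((y - w) \<bullet> v))
    + t\<^sup>2 * E * (gauss_dens s (w + 2 *\<^sub>R v) y * h y + gauss_dens s (w - 2 *\<^sub>R v) y * h y)" for y
  have "gauss_dens s (w + t *\<^sub>R v) y * h y \<le> R y" for y
  proof -
    have "gauss_dens s (w + t *\<^sub>R v) y * h y \<le> (gauss_dens s w y * (1 + t * (((y - w) \<bullet> v) / s))
        + t\<^sup>2 * E * (gauss_dens s (w + 2 *\<^sub>R v) y + gauss_dens s (w - 2 *\<^sub>R v) y)) * h y"
      using gauss_dens_le_second_order[OF assms] h_pos[of y] unfolding E_def
      by (intro mult_right_mono) auto
    also have "\<dots> = R y"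
      using s_pos by (simp add: R_def field_simps)
    finally show ?thesis .
  qed
  moreover have "integrable lborel R"
    unfolding R_def using integrable_mass integrable_centered_moment
    by (intro Bochner_Integration.integrable_add integrable_mult_right) auto
  ultimately have "mass (w + t *\<^sub>R v) \<le> (\<integral>y. R y \<partial>lborel)"
    unfolding mass_def using integrable_mass by (intro Bochner_Integration.integral_mono) auto
  also have "(\<integral>y. R y \<partial>lborel) = mass w + t / s * (mass w * ((barycenter w - w) \<bullet> v))
      + t\<^sup>2 * E * (mass (w + 2 *\<^sub>R v) + mass (w - 2 *\<^sub>R v))"
  proof -
    have "(\<integral>y. R y \<partial>lborel) = mass w + t / s * (\<integral>y. gauss_dens s w y * h y * ((y - w) \<bullet> v) \<partial>lborel)
        + t\<^sup>2 * E * (mass (w + 2 *\<^sub>R v) + mass (w - 2 *\<^sub>R v))"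
      unfolding R_def mass_def using integrable_mass integrable_centered_moment
      by (simp add: Bochner_Integration.integral_add del: inner_diff_left)
    then show ?thesis
      by (simp add: integral_centered_moment)
  qed
  finally show ?thesis
    by (simp add: E_def algebra_simps)
qed

text \<open>Formally the gradient of \<open>potential z\<close> is \<open>barycenter - z\<close>, so its minimisers are
  preimages of \<open>z\<close>.\<close>
definition potential :: "'a \<Rightarrow> 'a \<Rightarrow> real" where
  "potential z w = s * ln (mass w) + (norm w)\<^sup>2 / 2 - z \<bullet> w"

lemma continuous_on_potential: "continuous_on UNIV (potential z)"
  unfolding potential_def[abs_def] using mass_pos
  by (intro continuous_intros continuous_on_mass) (auto simp: less_imp_neq[symmetric])

lemma mass_ge_far:
  assumes "\<rho> > 0" and "norm w \<ge> \<rho>" and "m \<ge> 0" and "\<And>y. y \<in> cball 0 (\<rho> + 1) \<Longrightarrow> m \<le> h y"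
  shows "peak * exp (- (norm w - \<rho> + 1)\<^sup>2 / (2 * s)) * m * measure lborel (ball (0::'a) 1) \<le> mass w"
proof -
  define p where "p = (\<rho> / norm w) *\<^sub>R w"
  have w_pos: "norm w > 0"
    using assms(1,2) by linarith
  have "w - p = (1 - \<rho> / norm w) *\<^sub>R w"
    by (simp add: p_def algebra_simps)
  then have "dist w p = \<bar>1 - \<rho> / norm w\<bar> * norm w"
    by (simp add: dist_norm)
  also have "\<dots> = norm w - \<rho>"
    using assms(2) w_pos by (simp add: abs_of_nonneg field_simps)
  finally have dist_wp: "dist w p = norm w - \<rho>" .
  have "norm p = \<rho>"
    using w_pos assms(1) by (simp add: p_def)
  have "m \<le> h y" if "y \<in> ball p 1" for y
  proof (rule assms(4))
    have "norm (y - p) < 1"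
      using that by (simp add: dist_norm norm_minus_commute)
    then show "y \<in> cball 0 (\<rho> + 1)"
      using norm_triangle_sub[of y p] \<open>norm p = \<rho>\<close> by simp
  qed
  then have "peak * exp (- (dist w p + 1)\<^sup>2 / (2 * s)) * m * measure lborel (ball (0::'a) 1) \<le> mass w"
    using assms(3) by (intro mass_ge_ball) auto
  then show ?thesis
    unfolding dist_wp .
qed

text \<open>Coercivity needs the Gaussian decay in \<open>mass_ge_far\<close> to start at a radius beyond
  \<open>norm z + 1\<close>; a bound centred at the origin would only give \<open>- (norm w + 1)\<^sup>2 / 2\<close>.\<close>
lemma potential_coercive:
  obtains C where "\<And>w. norm w \<ge> norm z + 2 \<Longrightarrow> potential z w \<ge> norm w - C"
proof -
  define \<rho> where "\<rho> = norm z + 2"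
  have "\<rho> > 0"
    by (simp add: \<rho>_def add_nonneg_pos)
  obtain m where m: "m > 0" "\<forall>y\<in>cball 0 (\<rho> + 1). m \<le> h y"
    using h_bounded_below_on_cball by blast
  define M where "M = peak * m * measure lborel (ball (0::'a) 1)"
  have M_pos: "M > 0"
    using peak_pos m(1) content_ball_gt_0_iff[of "0::'a" 1] by (simp add: M_def)
  have "potential z w \<ge> norm w - ((norm z + 1)\<^sup>2 / 2 - s * ln M)" if w: "norm w \<ge> \<rho>" for w
  proof -
    have "exp (- (norm w - \<rho> + 1)\<^sup>2 / (2 * s)) * M \<le> mass w"
      using mass_ge_far[OF \<open>\<rho> > 0\<close> w] m by (simp add: M_def algebra_simps)
    then have "ln (exp (- (norm w - \<rho> + 1)\<^sup>2 / (2 * s)) * M) \<le> ln (mass w)"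
      using M_pos mass_pos[of w] by (subst ln_le_cancel_iff) auto
    then have "s * ln M - (norm w - \<rho> + 1)\<^sup>2 / 2 \<le> s * ln (mass w)"
      using M_pos s_pos by (simp add: ln_mult field_simps)
    moreover have "z \<bullet> w \<le> norm z * norm w"
      by (rule norm_cauchy_schwarz)
    moreover have "- (norm w - \<rho> + 1)\<^sup>2 / 2 + (norm w)\<^sup>2 / 2 - norm z * norm w
        = norm w - (norm z + 1)\<^sup>2 / 2"
      by (simp add: \<rho>_def power2_eq_square field_simps)
    ultimately show ?thesis
      unfolding potential_def by linarith
  qed
  then show ?thesis
    by (intro that[of "(norm z + 1)\<^sup>2 / 2 - s * ln M"]) (simp add: \<rho>_def)
qed

lemma potential_attains_min: "\<exists>w. \<forall>y. potential z w \<le> potential z y"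
proof -
  obtain C where "\<And>w. norm w \<ge> norm z + 2 \<Longrightarrow> potential z w \<ge> norm w - C"
    using potential_coercive by blast
  then show ?thesis
    using continuous_coercive_attains_min[OF continuous_on_potential] by blast
qed

lemma mass_ge_at_potential_min:
  assumes min: "\<And>y. potential z w \<le> potential z y"
  shows "mass w * (1 + (t * ((z - w) \<bullet> v) / s - t\<^sup>2 * (norm v)\<^sup>2 / (2 * s))) \<le> mass (w + t *\<^sub>R v)"
proof -
  define x where "x = t * ((z - w) \<bullet> v) / s - t\<^sup>2 * (norm v)\<^sup>2 / (2 * s)"
  have "(norm (w + t *\<^sub>R v))\<^sup>2 = (w + t *\<^sub>R v) \<bullet> (w + t *\<^sub>R v)"
    by (simp add: power2_norm_eq_inner)
  also have "\<dots> = w \<bullet> w + 2 * t * (w \<bullet> v) + t\<^sup>2 * (v \<bullet> v)"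
    by (simp add: inner_add_left inner_add_right inner_commute power2_eq_square algebra_simps)
  also have "\<dots> = (norm w)\<^sup>2 + 2 * t * (w \<bullet> v) + t\<^sup>2 * (norm v)\<^sup>2"
    by (simp add: power2_norm_eq_inner)
  finally have "(norm (w + t *\<^sub>R v))\<^sup>2 = (norm w)\<^sup>2 + 2 * t * (w \<bullet> v) + t\<^sup>2 * (norm v)\<^sup>2" .
  moreover have "s * x = t * ((z - w) \<bullet> v) - t\<^sup>2 * (norm v)\<^sup>2 / 2"
    using s_pos by (simp add: x_def field_simps)
  ultimately have "s * (ln (mass w) + x) \<le> s * ln (mass (w + t *\<^sub>R v))"
    using min[of "w + t *\<^sub>R v"]
    by (simp add: potential_def inner_add_right inner_diff_left field_simps)
  then have ln_le: "ln (mass w) + x \<le> ln (mass (w + t *\<^sub>R v))"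
    using s_pos by simp
  have "mass w * (1 + x) \<le> mass w * exp x"
    using mass_pos[of w] by (intro mult_left_mono exp_ge_add_one_self) auto
  also have "\<dots> = exp (ln (mass w) + x)"
    using mass_pos[of w] by (simp add: exp_add)
  also have "\<dots> \<le> mass (w + t *\<^sub>R v)"
    using ln_le mass_pos[of "w + t *\<^sub>R v"] by (metis exp_le_cancel_iff exp_ln)
  finally show ?thesis
    unfolding x_def .
qed

text \<open>The first-order condition, obtained without differentiating under the integral: along
  \<open>w + t v\<close> with \<open>v = z - barycenter w\<close>, compare the lower bound at the minimiser with
  \<open>mass_le_second_order\<close> and let \<open>t \<rightarrow> 0\<close>.\<close>
lemma barycenter_eq_if_potential_min:
  assumes min: "\<And>y. potential z w \<le> potential z y"
  shows "barycenter w = z"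
proof -
  define v where "v = z - barycenter w"
  define K where "K = exp (2 * (norm v)\<^sup>2 / s) * (mass (w + 2 *\<^sub>R v) + mass (w - 2 *\<^sub>R v))"
  define q where "q = mass w * (norm v)\<^sup>2 / s"
  have "q \<le> t * (K + q / 2)" if t: "0 < t" "t \<le> 1" for t
  proof -
    have "mass w * (1 + (t * ((z - w) \<bullet> v) / s - t\<^sup>2 * (norm v)\<^sup>2 / (2 * s))) \<le> mass (w + t *\<^sub>R v)"
      using min by (rule mass_ge_at_potential_min)
    also have "\<dots> \<le> mass w * (1 + t / s * ((barycenter w - w) \<bullet> v)) + t * (t * K)"
      using mass_le_second_order[of t w v] t by (simp add: K_def power2_eq_square mult.assoc)
    moreover have "(z - w) \<bullet> v = (barycenter w - w) \<bullet> v + (norm v)\<^sup>2"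
      by (simp add: v_def power2_norm_eq_inner inner_diff_left)
    then have "mass w * (1 + (t * ((z - w) \<bullet> v) / s - t\<^sup>2 * (norm v)\<^sup>2 / (2 * s)))
        = mass w * (1 + t / s * ((barycenter w - w) \<bullet> v)) + t * q - t * (t * (q / 2))"
      using s_pos by (simp add: q_def field_simps power2_eq_square)
    ultimately have "t * q \<le> t * (t * (K + q / 2))"
      by (simp add: distrib_left)
    then show ?thesis
      using t(1) by (rule mult_left_le_imp_le)
  qed
  then have "q \<le> 0"
    by (rule nonpos_if_le_small_multiples)
  then have "v = 0"
    using mass_pos[of w] s_pos by (simp add: q_def divide_le_0_iff mult_le_0_iff)
  then show ?thesis
    by (simp add: v_def)
qed

lemma surj_barycenter: "surj barycenter"
  using potential_attains_min barycenter_eq_if_potential_min by (metis surjI)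

lemma ln_mass_le: "ln (mass w) \<le> ln (\<integral>y. h y \<partial>lborel) - real DIM('a) / 2 * ln (2 * pi * s)"
proof -
  have "0 < peak * (\<integral>y. h y \<partial>lborel)"
    using mass_pos[of w] mass_le[of w] by linarith
  then have "ln (mass w) \<le> ln (peak * (\<integral>y. h y \<partial>lborel))"
    using mass_pos[of w] mass_le[of w] by simp
  also have "\<dots> = ln (\<integral>y. h y \<partial>lborel) - real DIM('a) / 2 * ln (2 * pi * s)"
    using peak_pos \<open>0 < peak * _\<close> s_pos by (simp add: ln_mult zero_less_mult_iff peak_def ln_powr)
  finally show ?thesis .
qed

lemma ln_mass_barycenter_ge:
  "ln (mass w) + (norm (barycenter w - w))\<^sup>2 / (2 * s) \<le> ln (mass (barycenter w))"
proof -
  have "ln (exp ((norm (barycenter w - w))\<^sup>2 / (2 * s)) * mass w) \<le> ln (mass (barycenter w))"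
    using mass_barycenter_ge[of w] mass_pos by (subst ln_le_cancel_iff) auto
  then show ?thesis
    using mass_pos[of w] by (simp add: ln_mult)
qed

end

theorem lemma1:
  fixes f :: "'a::euclidean_space \<Rightarrow> real" and lam del :: real
  assumes "lam > 0" and "del > 0"
    and "continuous_on UNIV f"
    and "\<exists>x0. \<forall>y. f x0 \<le> f y"
    and "(\<integral>\<^sup>+ y. ennreal (exp (- f y / del)) \<partial>lborel) < \<infinity>"
  shows "\<forall>z. H_fun lam del f z \<ge>
            - ln (\<integral>y. exp (- f y / del) \<partial>lborel) + real DIM('a) / 2 * ln (2 * pi * lam * del)"
proof
  fix z :: 'a
  define h where "h y = exp (- f y / del)" for y
  have "continuous_on UNIV h"
    unfolding h_def using assms(2,3) by (intro continuous_intros) auto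
  moreover have "integrable lborel h"
    using borel_measurable_continuous_onI[OF \<open>continuous_on UNIV h\<close>] assms(5)
    by (intro integrableI_bounded) (auto simp: h_def)
  ultimately interpret gaussian_smoothing "lam * del" h
    using assms(1,2) by unfold_locales (auto simp: h_def)
  have zprox: "zprox lam del f = barycenter"
    by (rule ext) (simp add: zprox_def gauss_exp_def barycenter_def moment_def mass_def h_def)
  define w where "w = inv barycenter z"
  have w: "barycenter w = z"
    using surj_barycenter by (simp add: w_def surj_f_inv_f)
  have "soft_moreau lam del f w = - del * ln (mass w)"
    by (simp add: soft_moreau_def gauss_exp_def mass_def h_def)
  then have H: "H_fun lam del f z = - (norm (w - z))\<^sup>2 / (2 * (lam * del)) - ln (mass w)"
    unfolding H_fun_def Let_def zprox w_def[symmetric] using assms(2) by (simp add: field_simps)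
  have "- ln (\<integral>y. h y \<partial>lborel) + real DIM('a) / 2 * ln (2 * pi * lam * del) \<le> - ln (mass z)"
    using ln_mass_le[of z] by (simp add: mult.assoc)
  also have "\<dots> \<le> H_fun lam del f z"
    using ln_mass_barycenter_ge[of w] unfolding H w by (simp add: norm_minus_commute)
  finally show "H_fun lam del f z \<ge>
      - ln (\<integral>y. exp (- f y / del) \<partial>lborel) + real DIM('a) / 2 * ln (2 * pi * lam * del)"
    by (simp add: h_def)
qed

end
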